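(* Under the standing assumptions of the context, $\|m_l'-(m^M)'\|_C=O(\mu(l))$ as $l\to\infty$.
   Context: Let $\theta$ be odd, non-decreasing, $C^2$, with $\theta(\omega)=\pi/4$ for $\omega>\pi/3$; fix $\pi/3\le\omega_0<\pi/2$. Meyer scaling function (Fourier transform): $\widehat{\varphi^M}(\omega)=1$ for $|\omega|\le2\omega_0$, $=\cos(\frac\pi4+\theta(\frac{\pi}{3(\pi-2\omega_0)}(|\omega|-\pi)))$ for $2\omega_0<|\omega|\le2\pi-2\omega_0$, $=0$ otherwise. Meyer mask: $2\pi$-periodic $m^M$ with $m^M(\omega)=\widehat{\varphi^M}(2\omega)$ on $[-\pi,\pi]$. $\|\cdot\|_C$: sup norm on $[-\pi,\pi]$. A linear method of summation $(\lambda_{n,k})$ maps $f$ with Fourier coefficients $a_k,b_k$ to $u_n(f,\omega)=\frac{a_0}2+\sum_{k=1}^n\lambda_{n,k}(a_k\cos k\omega+b_k\sin k\omega)$. $m^M_l:=m^M/(\cos\frac\omega2)^{2l}$. Standing assumptions: a method and a sequence $n(l)$ are fixed with $u_l:=u_{n(l)}(m^M_l,\cdot)$, $u_{1,l}:=u_{n(l)}((m^M_l)',\cdot)$ satisfying $\alpha(l):=\|u_l-m^M_l\|_C=o(l^{-1})$, $\gamma(l):=\|u_{1,l}-(m^M_l)'\|_C=o(1)$, $u_l(\pi)\ne0$; $l_0$ is fixed with $\inf_{l\ge l_0}|u_l(0)|>0$ and $l\ge l_0$. $\mu(l):=l\alpha(l)+\gamma(l)$. $m_l(\omega):=(\cos\frac\omega2)^{2l}u_l(\omega)/u_l(0)$.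 *)

theory Defs
  imports "HOL-Analysis.Analysis" "HOL-Library.Landau_Symbols"
begin

definition meyer_phi :: "(real \<Rightarrow> real) \<Rightarrow> real \<Rightarrow> real \<Rightarrow> real" where
  "meyer_phi \<theta> \<omega>0 \<omega> =
     (if \<bar>\<omega>\<bar> \<le> 2 * \<omega>0 then 1
      else if \<bar>\<omega>\<bar> \<le> 2 * pi - 2 * \<omega>0
        then cos (pi / 4 + \<theta> (pi / (3 * (pi - 2 * \<omega>0)) * (\<bar>\<omega>\<bar> - pi)))
      else 0)"

text \<open>Meyer mask: the 2pi-periodic function equal to meyer_phi(2 w) on [-pi,pi].
  The argument is reduced to [-pi,pi); at w = pi both conventions give 0.\<close>
definition meyer_mask :: "(real \<Rightarrow> real) \<Rightarrow> real \<Rightarrow> real \<Rightarrow> real" where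
  "meyer_mask \<theta> \<omega>0 \<omega> =
     meyer_phi \<theta> \<omega>0 (2 * (\<omega> - 2 * pi * of_int \<lfloor>(\<omega> + pi) / (2 * pi)\<rfloor>))"

definition meyer_mask_l :: "(real \<Rightarrow> real) \<Rightarrow> real \<Rightarrow> nat \<Rightarrow> real \<Rightarrow> real" where
  "meyer_mask_l \<theta> \<omega>0 l \<omega> = meyer_mask \<theta> \<omega>0 \<omega> / (cos (\<omega> / 2)) ^ (2 * l)"

definition fourier_a :: "(real \<Rightarrow> real) \<Rightarrow> nat \<Rightarrow> real" where
  "fourier_a f k = integral {-pi..pi} (\<lambda>t. f t * cos (real k * t)) / pi"

definition fourier_b :: "(real \<Rightarrow> real) \<Rightarrow> nat \<Rightarrow> real" where
  "fourier_b f k = integral {-pi..pi} (\<lambda>t. f t * sin (real k * t)) / pi"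

definition summation_mean :: "(nat \<Rightarrow> nat \<Rightarrow> real) \<Rightarrow> nat \<Rightarrow> (real \<Rightarrow> real) \<Rightarrow> real \<Rightarrow> real" where
  "summation_mean lam n f \<omega> = fourier_a f 0 / 2 +
     (\<Sum>k=1..n. lam n k * (fourier_a f k * cos (real k * \<omega>) + fourier_b f k * sin (real k * \<omega>)))"

definition supC :: "(real \<Rightarrow> real) \<Rightarrow> real" where
  "supC g = (SUP \<omega>\<in>{-pi..pi}. \<bar>g \<omega>\<bar>)"

definition u_l :: "(real \<Rightarrow> real) \<Rightarrow> real \<Rightarrow> (nat \<Rightarrow> nat \<Rightarrow> real) \<Rightarrow> (nat \<Rightarrow> nat) \<Rightarrow> nat \<Rightarrow> real \<Rightarrow> real" where
  "u_l \<theta> \<omega>0 lam n l = summation_mean lam (n l) (meyer_mask_l \<theta> \<omega>0 l)"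

definition u1_l :: "(real \<Rightarrow> real) \<Rightarrow> real \<Rightarrow> (nat \<Rightarrow> nat \<Rightarrow> real) \<Rightarrow> (nat \<Rightarrow> nat) \<Rightarrow> nat \<Rightarrow> real \<Rightarrow> real" where
  "u1_l \<theta> \<omega>0 lam n l = summation_mean lam (n l) (deriv (meyer_mask_l \<theta> \<omega>0 l))"

definition alpha_l :: "(real \<Rightarrow> real) \<Rightarrow> real \<Rightarrow> (nat \<Rightarrow> nat \<Rightarrow> real) \<Rightarrow> (nat \<Rightarrow> nat) \<Rightarrow> nat \<Rightarrow> real" where
  "alpha_l \<theta> \<omega>0 lam n l = supC (\<lambda>\<omega>. u_l \<theta> \<omega>0 lam n l \<omega> - meyer_mask_l \<theta> \<omega>0 l \<omega>)"

definition gamma_l :: "(real \<Rightarrow> real) \<Rightarrow> real \<Rightarrow> (nat \<Rightarrow> nat \<Rightarrow> real) \<Rightarrow> (nat \<Rightarrow> nat) \<Rightarrow> nat \<Rightarrow> real" where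
  "gamma_l \<theta> \<omega>0 lam n l = supC (\<lambda>\<omega>. u1_l \<theta> \<omega>0 lam n l \<omega> - deriv (meyer_mask_l \<theta> \<omega>0 l) \<omega>)"

definition mu_l :: "(real \<Rightarrow> real) \<Rightarrow> real \<Rightarrow> (nat \<Rightarrow> nat \<Rightarrow> real) \<Rightarrow> (nat \<Rightarrow> nat) \<Rightarrow> nat \<Rightarrow> real" where
  "mu_l \<theta> \<omega>0 lam n l = real l * alpha_l \<theta> \<omega>0 lam n l + gamma_l \<theta> \<omega>0 lam n l"

definition m_l :: "(real \<Rightarrow> real) \<Rightarrow> real \<Rightarrow> (nat \<Rightarrow> nat \<Rightarrow> real) \<Rightarrow> (nat \<Rightarrow> nat) \<Rightarrow> nat \<Rightarrow> real \<Rightarrow> real" where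
  "m_l \<theta> \<omega>0 lam n l \<omega> = (cos (\<omega> / 2)) ^ (2 * l) * u_l \<theta> \<omega>0 lam n l \<omega> / u_l \<theta> \<omega>0 lam n l 0"

end

theory Submission
  imports Defs
begin

text \<open>
  Write \<open>P = cos(\<omega>/2)^(2l)\<close>, \<open>f = m\<^sup>M\<^sub>l\<close>, \<open>u = u\<^sub>l\<close> and \<open>c = u\<^sub>l(0)\<close>, so that
  \<open>m\<^sup>M = P f\<close> on \<open>[-\<pi>, \<pi>]\<close>. Since \<open>f\<close> vanishes near \<open>\<plusminus>\<pi>\<close>, integration by parts turns the
  Fourier coefficients of \<open>f'\<close> into those of \<open>f\<close>, hence \<open>u' = u\<^sub>1\<^sub>,\<^sub>l\<close>, and
  \<open>m\<^sub>l' - (m\<^sup>M)' = (P'(u - f) + P' f (1 - c) + P (u\<^sub>1\<^sub>,\<^sub>l - f') + P f' (1 - c)) / c\<close>.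
  Here \<open>|u - f| \<le> \<alpha>\<close>, \<open>|1 - c| = |f(0) - u(0)| \<le> \<alpha>\<close>, \<open>|u\<^sub>1\<^sub>,\<^sub>l - f'| \<le> \<gamma>\<close>,
  \<open>|P| \<le> 1\<close>, \<open>|P'| \<le> l\<close>, and \<open>|P' f| \<le> 2l\<close>, \<open>|P f'| = |(m\<^sup>M)' - P' f| \<le> M + 2l\<close> because \<open>f\<close>
  is supported where \<open>cos(\<omega>/2) \<ge> 1/2\<close>. So for every \<open>l \<ge> max l\<^sub>0 1\<close> the sup norm is at most
  \<open>(5 + M)/d \<cdot> \<mu>(l)\<close>, with \<open>M\<close> a bound for \<open>(m\<^sup>M)'\<close> and \<open>d = inf |u\<^sub>l(0)|\<close>.
\<close>

lemma fourier_coeffs_deriv: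
  fixes f f' :: "real \<Rightarrow> real" and k :: nat
  assumes f': "\<And>x. x \<in> {-pi..pi} \<Longrightarrow> (f has_real_derivative f' x) (at x)"
    and periodic: "f (-pi) = f pi"
  shows "fourier_a (deriv f) k = real k * fourier_b f k"
    and "fourier_b (deriv f) k = - real k * fourier_a f k"
proof -
  have deriv_f: "deriv f x = f' x" if "x \<in> {-pi..pi}" for x
    using f'[OF that] by (rule DERIV_imp_deriv)
  have f'_within: "(f has_real_derivative f' x) (at x within {-pi..pi})" if "x \<in> {-pi..pi}" for x
    using f'[OF that] by (rule has_field_derivative_at_within)
  have "continuous_on {-pi..pi} f"
    using f' by (meson DERIV_continuous continuous_at_imp_continuous_on)
  then have int_sin: "(\<lambda>x. f x * sin (k * x)) integrable_on {-pi..pi}"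
    and int_cos: "(\<lambda>x. f x * cos (k * x)) integrable_on {-pi..pi}"
    by (auto intro!: integrable_continuous_interval continuous_intros)
  have "((\<lambda>x. f' x * cos (k * x) - k * (f x * sin (k * x))) has_integral
      f pi * cos (k * pi) - f (-pi) * cos (k * (-pi))) {-pi..pi}"
    by (rule fundamental_theorem_of_calculus)
      (auto intro!: derivative_eq_intros f'_within simp: has_real_derivative_iff_has_vector_derivative[symmetric] algebra_simps)
  then have "((\<lambda>x. (f' x * cos (k * x) - k * (f x * sin (k * x))) + k * (f x * sin (k * x)))
      has_integral 0 + k * integral {-pi..pi} (\<lambda>x. f x * sin (k * x))) {-pi..pi}"
    by (intro has_integral_add has_integral_mult_right integrable_integral int_sin) (simp_all add: periodic)
  then have "((\<lambda>x. f' x * cos (k * x)) has_integral k * integral {-pi..pi} (\<lambda>x. f x * sin (k * x))) {-pi..pi}"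
    by simp
  moreover have "integral {-pi..pi} (\<lambda>x. deriv f x * cos (k * x)) = integral {-pi..pi} (\<lambda>x. f' x * cos (k * x))"
    by (intro integral_cong) (simp add: deriv_f)
  ultimately show "fourier_a (deriv f) k = real k * fourier_b f k"
    by (simp add: fourier_a_def fourier_b_def integral_unique)
  have "((\<lambda>x. f' x * sin (k * x) + k * (f x * cos (k * x))) has_integral
      f pi * sin (k * pi) - f (-pi) * sin (k * (-pi))) {-pi..pi}"
    by (rule fundamental_theorem_of_calculus)
      (auto intro!: derivative_eq_intros f'_within simp: has_real_derivative_iff_has_vector_derivative[symmetric] algebra_simps)
  then have "((\<lambda>x. (f' x * sin (k * x) + k * (f x * cos (k * x))) - k * (f x * cos (k * x)))
      has_integral 0 - k * integral {-pi..pi} (\<lambda>x. f x * cos (k * x))) {-pi..pi}"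
    by (intro has_integral_diff has_integral_mult_right integrable_integral int_cos) simp_all
  then have "((\<lambda>x. f' x * sin (k * x)) has_integral - k * integral {-pi..pi} (\<lambda>x. f x * cos (k * x))) {-pi..pi}"
    by simp
  moreover have "integral {-pi..pi} (\<lambda>x. deriv f x * sin (k * x)) = integral {-pi..pi} (\<lambda>x. f' x * sin (k * x))"
    by (intro integral_cong) (simp add: deriv_f)
  ultimately show "fourier_b (deriv f) k = - real k * fourier_a f k"
    by (simp add: fourier_a_def fourier_b_def integral_unique)
qed

lemma summation_mean_has_real_derivative:
  assumes f': "\<And>x. x \<in> {-pi..pi} \<Longrightarrow> (f has_real_derivative f' x) (at x)"
    and periodic: "f (-pi) = f pi"
  shows "(summation_mean lam N f has_real_derivative summation_mean lam N (deriv f) \<omega>) (at \<omega>)"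
proof -
  have "(summation_mean lam N f has_real_derivative
      (\<Sum>k=1..N. lam N k * (fourier_a f k * (- k * sin (k * \<omega>)) + fourier_b f k * (k * cos (k * \<omega>))))) (at \<omega>)"
    unfolding summation_mean_def[abs_def]
    by (auto intro!: derivative_eq_intros DERIV_sum simp: algebra_simps)
  moreover have "summation_mean lam N (deriv f) \<omega> =
      (\<Sum>k=1..N. lam N k * (fourier_a f k * (- k * sin (k * \<omega>)) + fourier_b f k * (k * cos (k * \<omega>))))"
    using fourier_coeffs_deriv[OF f' periodic] by (simp add: summation_mean_def algebra_simps)
  ultimately show ?thesis
    by simp
qed

lemma supC_le:
  assumes "\<And>\<omega>. \<omega> \<in> {-pi..pi} \<Longrightarrow> \<bar>g \<omega>\<bar> \<le> K"
  shows "supC g \<le> K"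
  unfolding supC_def using assms by (intro cSUP_least) auto

lemma abs_le_supC:
  assumes "bdd_above ((\<lambda>\<omega>. \<bar>g \<omega>\<bar>) ` {-pi..pi})" and "\<omega> \<in> {-pi..pi}"
  shows "\<bar>g \<omega>\<bar> \<le> supC g"
  unfolding supC_def using assms by (intro cSUP_upper)

lemma abs_le_supC_continuous:
  assumes "continuous_on {-pi..pi} g" and "\<omega> \<in> {-pi..pi}"
  shows "\<bar>g \<omega>\<bar> \<le> supC g"
  using assms by (intro abs_le_supC bounded_imp_bdd_above compact_imp_bounded
      compact_continuous_image continuous_intros) auto

lemma supC_nonneg:
  assumes "bdd_above ((\<lambda>\<omega>. \<bar>g \<omega>\<bar>) ` {-pi..pi})"
  shows "0 \<le> supC g"
  using abs_le_supC[OF assms, of 0] by simp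

definition cos_half_pow :: "nat \<Rightarrow> real \<Rightarrow> real" where
  "cos_half_pow l \<omega> = cos (\<omega> / 2) ^ (2 * l)"

definition cos_half_pow_deriv :: "nat \<Rightarrow> real \<Rightarrow> real" where
  "cos_half_pow_deriv l \<omega> = - real l * cos (\<omega> / 2) ^ (2 * l - 1) * sin (\<omega> / 2)"

lemma cos_half_pow_has_real_derivative:
  "(cos_half_pow l has_real_derivative cos_half_pow_deriv l \<omega>) (at \<omega>)"
proof -
  have "((\<lambda>x. cos (x / 2) ^ (2 * l)) has_real_derivative
      real (2 * l) * cos (\<omega> / 2) ^ (2 * l - 1) * (- sin (\<omega> / 2) * (1 / 2))) (at \<omega>)"
    by (auto intro!: derivative_eq_intros)
  then show ?thesis
    unfolding cos_half_pow_def[abs_def] cos_half_pow_deriv_def by (simp add: mult.assoc)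
qed

lemma abs_cos_half_pow_le_1: "\<bar>cos_half_pow l \<omega>\<bar> \<le> 1"
  by (simp add: cos_half_pow_def power_abs power_le_one)

lemma abs_cos_half_pow_deriv_le: "\<bar>cos_half_pow_deriv l \<omega>\<bar> \<le> real l"
proof -
  have "\<bar>cos_half_pow_deriv l \<omega>\<bar> = real l * \<bar>cos (\<omega> / 2)\<bar> ^ (2 * l - 1) * \<bar>sin (\<omega> / 2)\<bar>"
    by (simp add: cos_half_pow_deriv_def abs_mult power_abs)
  also have "\<dots> \<le> real l * 1 * 1"
    by (intro mult_mono power_le_one) auto
  finally show ?thesis
    by simp
qed

lemma cos_half_pow_pos: "\<bar>\<omega>\<bar> < pi \<Longrightarrow> cos_half_pow l \<omega> > 0"
  unfolding cos_half_pow_def by (intro zero_less_power cos_gt_zero_pi) auto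

lemma cos_half_pow_deriv_eq_0:
  assumes "\<bar>\<omega>\<bar> = pi"
  shows "cos_half_pow_deriv l \<omega> = 0"
proof -
  have "\<omega> = pi \<or> \<omega> = - pi"
    using assms by auto
  then have "cos (\<omega> / 2) = 0"
    by auto
  then show ?thesis
    by (cases l) (auto simp: cos_half_pow_deriv_def)
qed

lemma cos_half_ge_half: "\<bar>\<omega>\<bar> \<le> 2 * pi / 3 \<Longrightarrow> cos (\<omega> / 2) \<ge> 1 / 2"
  using cos_monotone_0_pi_le[of "\<bar>\<omega>\<bar> / 2" "pi / 3"] by (simp add: cos_60 abs_if split: if_splits)

lemma has_real_derivative_locally_zero:
  assumes "open S" "\<omega> \<in> S" "\<And>x. x \<in> S \<Longrightarrow> f x = 0"
  shows "(f has_real_derivative 0) (at \<omega>)"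
  using has_field_derivative_transform_within_open[OF DERIV_const[of 0] assms(1,2)] assms(3) by simp

lemma abs_perturbed_product_rule_le:
  fixes P P' f f' u e c \<alpha> \<gamma> L M d :: real
  assumes P: "\<bar>P\<bar> \<le> 1" and P': "\<bar>P'\<bar> \<le> L" and P'f: "\<bar>P' * f\<bar> \<le> 2 * L" and Pf': "\<bar>P * f'\<bar> \<le> M + 2 * L"
    and u: "\<bar>u - f\<bar> \<le> \<alpha>" and c: "\<bar>1 - c\<bar> \<le> \<alpha>" and e: "\<bar>e - f'\<bar> \<le> \<gamma>"
    and "1 \<le> L" and "0 \<le> M" and "0 < d" and "d \<le> \<bar>c\<bar>"
  shows "\<bar>(P' * u + P * e) / c - (P' * f + P * f')\<bar> \<le> (5 + M) / d * (L * \<alpha> + \<gamma>)"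
proof -
  have "c \<noteq> 0" and \<alpha>: "0 \<le> \<alpha>" and \<gamma>: "0 \<le> \<gamma>" and L: "0 \<le> L"
    using assms by auto
  then have "(P' * u + P * e) / c - (P' * f + P * f')
      = (P' * (u - f) + P' * f * (1 - c) + P * (e - f') + P * f' * (1 - c)) / c"
    by (simp add: field_simps)
  also have "\<bar>\<dots>\<bar> \<le> (L * \<alpha> + 2 * L * \<alpha> + 1 * \<gamma> + (M + 2 * L) * \<alpha>) / d"
    unfolding abs_divide
  proof (rule frac_le)
    have "\<bar>P' * (u - f)\<bar> \<le> L * \<alpha>"
      using mult_mono[OF P' u] L by (simp add: abs_mult)
    moreover have "\<bar>P' * f * (1 - c)\<bar> \<le> 2 * L * \<alpha>"
      using mult_mono[OF P'f c] L by (simp add: abs_mult)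
    moreover have "\<bar>P * (e - f')\<bar> \<le> 1 * \<gamma>"
      using mult_mono[OF P e] by (simp add: abs_mult)
    moreover have "\<bar>P * f' * (1 - c)\<bar> \<le> (M + 2 * L) * \<alpha>"
      using mult_mono[OF Pf' c] order_trans[OF abs_ge_zero Pf'] by (simp add: abs_mult)
    ultimately show "\<bar>P' * (u - f) + P' * f * (1 - c) + P * (e - f') + P * f' * (1 - c)\<bar>
        \<le> L * \<alpha> + 2 * L * \<alpha> + 1 * \<gamma> + (M + 2 * L) * \<alpha>"
      by (smt (verit) abs_triangle_ineq)
  qed (use assms \<alpha> \<gamma> in auto)
  also have "\<dots> \<le> (5 + M) / d * (L * \<alpha> + \<gamma>)"
  proof -
    have "M * \<alpha> \<le> M * (L * \<alpha>)"
      using assms \<alpha> by (intro mult_left_mono) (simp_all add: mult_le_cancel_right1)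
    then have "L * \<alpha> + 2 * L * \<alpha> + 1 * \<gamma> + (M + 2 * L) * \<alpha> \<le> (5 + M) * (L * \<alpha> + \<gamma>)"
      using mult_nonneg_nonneg[OF \<open>0 \<le> M\<close> \<gamma>] \<gamma> by (simp add: algebra_simps)
    then show ?thesis
      using divide_right_mono[of _ _ d] \<open>0 < d\<close> by simp
  qed
  finally show ?thesis .
qed

locale meyer_angle =
  fixes \<theta> \<theta>' :: "real \<Rightarrow> real" and \<omega>0 :: real
  assumes odd: "\<And>x. \<theta> (- x) = - \<theta> x"
    and has_deriv: "\<And>x. (\<theta> has_real_derivative \<theta>' x) (at x)"
    and deriv_cont: "continuous_on UNIV \<theta>'"
    and flat: "\<And>x. x > pi / 3 \<Longrightarrow> \<theta> x = pi / 4"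
    and \<omega>0_ge: "pi / 3 \<le> \<omega>0" and \<omega>0_less: "\<omega>0 < pi / 2"
begin

lemma \<theta>_flat_right: "x \<ge> pi / 3 \<Longrightarrow> \<theta> x = pi / 4"
proof -
  assume x: "x \<ge> pi / 3"
  have "continuous_on UNIV \<theta>"
    using has_deriv by (meson DERIV_continuous continuous_at_imp_continuous_on)
  then have "closed {x. \<theta> x = pi / 4}"
    by (intro closed_Collect_eq) auto
  moreover have "{pi / 3<..} \<subseteq> {x. \<theta> x = pi / 4}"
    using flat by auto
  ultimately have "closure {pi / 3<..} \<subseteq> {x. \<theta> x = pi / 4}"
    by (rule closure_minimal[rotated])
  then show ?thesis
    using x by auto
qed

lemma \<theta>_flat_left: "x \<le> - pi / 3 \<Longrightarrow> \<theta> x = - pi / 4"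
  using \<theta>_flat_right[of "- x"] odd[of x] by auto

lemma \<theta>'_eq_0: "\<bar>y\<bar> > pi / 3 \<Longrightarrow> \<theta>' y = 0"
proof -
  assume y: "\<bar>y\<bar> > pi / 3"
  obtain S c where "open S" "y \<in> S" "\<And>x. x \<in> S \<Longrightarrow> \<theta> x = c"
  proof (cases "y > 0")
    case True
    with y show ?thesis
      using flat by (intro that[of "{pi / 3<..}" "pi / 4"]) auto
  next
    case False
    with y show ?thesis
      using \<theta>_flat_left by (intro that[of "{..<- pi / 3}" "- pi / 4"]) auto
  qed
  then have "((\<lambda>x. c) has_real_derivative \<theta>' y) (at y)"
    using has_field_derivative_transform_within_open[OF has_deriv[of y]] by simp
  then show ?thesis
    using DERIV_const DERIV_unique by blast
qed

lemma bounded_\<theta>': "\<exists>B. \<forall>y. \<bar>\<theta>' y\<bar> \<le> B"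
proof -
  obtain B where B: "\<And>y. y \<in> {-pi..pi} \<Longrightarrow> \<bar>\<theta>' y\<bar> \<le> B"
    using compact_imp_bounded[OF compact_continuous_image[OF continuous_on_subset[OF deriv_cont]]]
    by (fastforce simp: bounded_iff)
  have "\<bar>\<theta>' y\<bar> \<le> max B 0" for y
  proof (cases "\<bar>y\<bar> \<le> pi")
    case True
    then show ?thesis
      using B[of y] by (simp add: abs_le_iff)
  next
    case False
    then show ?thesis
      using \<theta>'_eq_0[of y] by simp
  qed
  then show ?thesis
    by blast
qed

lemma \<omega>0_pos: "0 < \<omega>0"
  using \<omega>0_ge pi_gt_zero by linarith

definition slope :: real where
  "slope = pi / (3 * (pi - 2 * \<omega>0))"

definition phi_deriv :: "real \<Rightarrow> real" where
  "phi_deriv x = - sgn x * slope * sin (pi / 4 + \<theta> (slope * (\<bar>x\<bar> - pi))) * \<theta>' (slope * (\<bar>x\<bar> - pi))"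

lemma slope_pos: "slope > 0"
  using \<omega>0_less by (simp add: slope_def)

lemma slope_mult_gap: "slope * (pi - 2 * \<omega>0) = pi / 3"
  using \<omega>0_less by (simp add: slope_def field_simps)

lemma meyer_phi_eq: "meyer_phi \<theta> \<omega>0 x = cos (pi / 4 + \<theta> (slope * (\<bar>x\<bar> - pi)))"
proof -
  consider "\<bar>x\<bar> \<le> 2 * \<omega>0" | "2 * \<omega>0 < \<bar>x\<bar>" "\<bar>x\<bar> \<le> 2 * pi - 2 * \<omega>0" | "2 * pi - 2 * \<omega>0 < \<bar>x\<bar>"
    by linarith
  then show ?thesis
  proof cases
    case 1
    then have "slope * (\<bar>x\<bar> - pi) \<le> slope * - (pi - 2 * \<omega>0)"
      using slope_pos by (intro mult_left_mono) auto
    then have "\<theta> (slope * (\<bar>x\<bar> - pi)) = - pi / 4"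
      using slope_mult_gap by (intro \<theta>_flat_left) (simp add: algebra_simps)
    with 1 show ?thesis
      by (simp add: meyer_phi_def)
  next
    case 2
    then show ?thesis
      by (simp add: meyer_phi_def slope_def)
  next
    case 3
    then have "slope * (\<bar>x\<bar> - pi) > slope * (pi - 2 * \<omega>0)"
      using slope_pos by (intro mult_strict_left_mono) auto
    then have flat_here: "\<theta> (slope * (\<bar>x\<bar> - pi)) = pi / 4"
      using slope_mult_gap by (intro flat) auto
    have "meyer_phi \<theta> \<omega>0 x = 0"
      using 3 \<omega>0_less by (simp add: meyer_phi_def)
    then show ?thesis
      unfolding flat_here by simp
  qed
qed

lemma meyer_phi_has_derivative: "(meyer_phi \<theta> \<omega>0 has_real_derivative phi_deriv x) (at x)"
proof -
  define \<Psi> where "\<Psi> y = cos (pi / 4 + \<theta> (slope * (y - pi)))" for y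
  have \<Psi>: "(\<Psi> has_real_derivative - sin (pi / 4 + \<theta> (slope * (y - pi))) * (\<theta>' (slope * (y - pi)) * slope)) (at y)"
    for y
    unfolding \<Psi>_def[abs_def]
    by (auto intro!: derivative_eq_intros DERIV_chain2[OF has_deriv])
  have phi: "meyer_phi \<theta> \<omega>0 y = \<Psi> \<bar>y\<bar>" for y
    by (simp add: \<Psi>_def meyer_phi_eq)
  consider "x > 0" | "x < 0" | "x = 0"
    by linarith
  then show ?thesis
  proof cases
    case 1
    have "(meyer_phi \<theta> \<omega>0 has_real_derivative
        - sin (pi / 4 + \<theta> (slope * (x - pi))) * (\<theta>' (slope * (x - pi)) * slope)) (at x)"
      by (rule has_field_derivative_transform_within_open[OF \<Psi>, of "{0<..}"]) (use 1 in \<open>auto simp: phi\<close>)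
    with 1 show ?thesis
      by (simp add: phi_deriv_def algebra_simps)
  next
    case 2
    have "((\<lambda>y. \<Psi> (- y)) has_real_derivative phi_deriv x) (at x)"
      using 2 DERIV_chain2[where s=UNIV, OF \<Psi>[of "- x"] DERIV_minus[OF DERIV_ident]]
      by (simp add: phi_deriv_def mult_ac)
    then show ?thesis
      by (rule has_field_derivative_transform_within_open[of _ _ _ "{..<0}"]) (use 2 in \<open>auto simp: phi\<close>)
  next
    case 3
    have "(meyer_phi \<theta> \<omega>0 has_real_derivative 0) (at x)"
      by (rule has_field_derivative_transform_within_open[OF DERIV_const, of "{- 2 * \<omega>0<..<2 * \<omega>0}"])
        (use 3 \<omega>0_pos in \<open>auto simp: meyer_phi_def\<close>)
    with 3 show ?thesis
      by (simp add: phi_deriv_def)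
  qed
qed

lemma bounded_phi_deriv: "\<exists>K. \<forall>x. \<bar>phi_deriv x\<bar> \<le> K"
proof -
  obtain B where B: "\<And>y. \<bar>\<theta>' y\<bar> \<le> B"
    using bounded_\<theta>' by blast
  have "\<bar>phi_deriv x\<bar> \<le> 1 * slope * 1 * B" for x
    unfolding phi_deriv_def abs_mult abs_minus_cancel
    using B slope_pos by (intro mult_mono) (auto simp: abs_sgn_eq)
  then show ?thesis
    by blast
qed

lemma meyer_mask_eq_phi:
  assumes "- pi \<le> y" "y < pi"
  shows "meyer_mask \<theta> \<omega>0 y = meyer_phi \<theta> \<omega>0 (2 * y)"
proof -
  have "\<lfloor>(y + pi) / (2 * pi)\<rfloor> = 0"
    using assms by (simp add: floor_eq_iff field_simps)
  then show ?thesis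
    by (simp add: meyer_mask_def)
qed

lemma meyer_phi_eq_0: "2 * pi - 2 * \<omega>0 < \<bar>x\<bar> \<Longrightarrow> meyer_phi \<theta> \<omega>0 x = 0"
  using \<omega>0_less by (simp add: meyer_phi_def)

lemma meyer_mask_eq_0:
  assumes "pi - \<omega>0 < \<bar>y\<bar>" "\<bar>y\<bar> < pi + \<omega>0"
  shows "meyer_mask \<theta> \<omega>0 y = 0"
proof -
  have "\<omega>0 < pi"
    using \<omega>0_less pi_gt_zero by linarith
  then consider "- pi \<le> y" "y < pi" | "\<lfloor>(y + pi) / (2 * pi)\<rfloor> = 1" "y \<ge> pi"
    | "\<lfloor>(y + pi) / (2 * pi)\<rfloor> = - 1" "y < - pi"
    using assms by (cases "y < - pi"; cases "y < pi") (auto simp: floor_eq_iff field_simps)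
  then show ?thesis
  proof cases
    case 1
    with assms show ?thesis
      by (simp add: meyer_mask_eq_phi meyer_phi_eq_0)
  qed (use assms in \<open>auto simp: meyer_mask_def meyer_phi_eq_0\<close>)
qed

lemma meyer_mask_locally_zero_at_pi:
  assumes "\<bar>\<omega>\<bar> = pi"
  obtains S where "open S" "\<omega> \<in> S" "\<And>y. y \<in> S \<Longrightarrow> meyer_mask \<theta> \<omega>0 y = 0"
proof
  show "open {y. pi - \<omega>0 < \<bar>y\<bar> \<and> \<bar>y\<bar> < pi + \<omega>0}"
    by (intro open_Collect_conj open_Collect_less continuous_intros)
  show "\<omega> \<in> {y. pi - \<omega>0 < \<bar>y\<bar> \<and> \<bar>y\<bar> < pi + \<omega>0}"
    using assms \<omega>0_pos by simp
qed (use meyer_mask_eq_0 in auto)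

text \<open>Meaningful on \<open>[-\<pi>, \<pi>]\<close> only; the value \<open>0\<close> at \<open>\<plusminus>\<pi>\<close> is right because the mask vanishes
  near \<open>\<plusminus>\<pi>\<close>.\<close>
definition mask_deriv :: "real \<Rightarrow> real" where
  "mask_deriv \<omega> = (if \<bar>\<omega>\<bar> < pi then 2 * phi_deriv (2 * \<omega>) else 0)"

lemma meyer_mask_has_derivative:
  assumes "\<bar>\<omega>\<bar> \<le> pi"
  shows "(meyer_mask \<theta> \<omega>0 has_real_derivative mask_deriv \<omega>) (at \<omega>)"
proof (cases "\<bar>\<omega>\<bar> < pi")
  case True
  have "((\<lambda>y. meyer_phi \<theta> \<omega>0 (2 * y)) has_real_derivative mask_deriv \<omega>) (at \<omega>)"
    using True DERIV_chain2[where s=UNIV, OF meyer_phi_has_derivative DERIV_cmult[OF DERIV_ident, of 2]]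
    by (simp add: mask_deriv_def mult.commute)
  then show ?thesis
    by (rule has_field_derivative_transform_within_open[of _ _ _ "{- pi<..<pi}"])
      (use True in \<open>auto simp: meyer_mask_eq_phi\<close>)
next
  case False
  with assms have "\<bar>\<omega>\<bar> = pi"
    by simp
  with False show ?thesis
    using has_real_derivative_locally_zero meyer_mask_locally_zero_at_pi
    by (metis mask_deriv_def)
qed

lemma mask_deriv_eq_0:
  assumes "pi - \<omega>0 < \<bar>\<omega>\<bar>"
  shows "mask_deriv \<omega> = 0"
proof (cases "\<bar>\<omega>\<bar> < pi")
  case True
  have "slope * (\<bar>2 * \<omega>\<bar> - pi) > slope * (pi - 2 * \<omega>0)"
    using assms slope_pos by (intro mult_strict_left_mono) auto
  then have "\<theta>' (slope * (\<bar>2 * \<omega>\<bar> - pi)) = 0"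
    using slope_mult_gap by (intro \<theta>'_eq_0) auto
  with True show ?thesis
    by (simp add: mask_deriv_def phi_deriv_def)
qed (simp add: mask_deriv_def)

lemma abs_meyer_mask_le_1: "\<bar>meyer_mask \<theta> \<omega>0 y\<bar> \<le> 1"
  by (simp add: meyer_mask_def meyer_phi_eq)

lemma meyer_mask_0: "meyer_mask \<theta> \<omega>0 0 = 1"
  using \<omega>0_pos by (simp add: meyer_mask_eq_phi meyer_phi_def)

lemma bounded_mask_deriv: "\<exists>M. \<forall>x. \<bar>mask_deriv x\<bar> \<le> M"
proof -
  obtain K where K: "\<And>x. \<bar>phi_deriv x\<bar> \<le> K"
    using bounded_phi_deriv by blast
  then have "0 \<le> K"
    using order_trans[OF abs_ge_zero K] by blast
  with K have "\<bar>mask_deriv x\<bar> \<le> 2 * K" for x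
    by (simp add: mask_deriv_def abs_mult)
  then show ?thesis
    by blast
qed

text \<open>The quotient rule for \<open>m\<^sup>M\<^sub>l = m\<^sup>M / cos(\<omega>/2)^(2l)\<close>, written so that the product rule
  \<open>(m\<^sup>M)' = P' m\<^sup>M\<^sub>l + P (m\<^sup>M\<^sub>l)'\<close> is immediate.\<close>
definition mask_l_deriv :: "nat \<Rightarrow> real \<Rightarrow> real" where
  "mask_l_deriv l \<omega> = (if \<bar>\<omega>\<bar> < pi
     then (mask_deriv \<omega> - cos_half_pow_deriv l \<omega> * meyer_mask_l \<theta> \<omega>0 l \<omega>) / cos_half_pow l \<omega> else 0)"

lemma meyer_mask_l_eq: "meyer_mask_l \<theta> \<omega>0 l = (\<lambda>\<omega>. meyer_mask \<theta> \<omega>0 \<omega> / cos_half_pow l \<omega>)"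
  by (simp add: fun_eq_iff meyer_mask_l_def cos_half_pow_def)

lemma meyer_mask_l_has_derivative:
  assumes "\<bar>\<omega>\<bar> \<le> pi"
  shows "(meyer_mask_l \<theta> \<omega>0 l has_real_derivative mask_l_deriv l \<omega>) (at \<omega>)"
proof (cases "\<bar>\<omega>\<bar> < pi")
  case True
  then have "cos_half_pow l \<omega> \<noteq> 0"
    using cos_half_pow_pos[of \<omega> l] by simp
  with True show ?thesis
    using DERIV_divide[OF meyer_mask_has_derivative[OF assms] cos_half_pow_has_real_derivative]
    by (simp add: meyer_mask_l_eq mask_l_deriv_def field_simps power2_eq_square)
next
  case False
  with assms have "\<bar>\<omega>\<bar> = pi"
    by simp
  then obtain S where "open S" "\<omega> \<in> S" "\<And>y. y \<in> S \<Longrightarrow> meyer_mask_l \<theta> \<omega>0 l y = 0"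
    using meyer_mask_locally_zero_at_pi by (metis div_0 meyer_mask_l_def)
  with False show ?thesis
    using has_real_derivative_locally_zero by (simp add: mask_l_deriv_def)
qed

lemma meyer_mask_l_eq_0_at_pi: "\<bar>\<omega>\<bar> = pi \<Longrightarrow> meyer_mask_l \<theta> \<omega>0 l \<omega> = 0"
  using meyer_mask_eq_0[of \<omega>] \<omega>0_pos by (simp add: meyer_mask_l_def)

lemma mask_deriv_eq_product_rule:
  assumes "\<bar>\<omega>\<bar> \<le> pi"
  shows "mask_deriv \<omega> = cos_half_pow_deriv l \<omega> * meyer_mask_l \<theta> \<omega>0 l \<omega> + cos_half_pow l \<omega> * mask_l_deriv l \<omega>"
proof (cases "\<bar>\<omega>\<bar> < pi")
  case True
  then have "cos_half_pow l \<omega> \<noteq> 0"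
    using cos_half_pow_pos[of \<omega> l] by simp
  with True show ?thesis
    by (simp add: mask_l_deriv_def field_simps)
next
  case False
  with assms have "\<bar>\<omega>\<bar> = pi"
    by simp
  with False show ?thesis
    using \<omega>0_pos by (simp add: mask_l_deriv_def mask_deriv_def cos_half_pow_deriv_eq_0)
qed

lemma meyer_mask_eq_0_near_pi: "\<bar>\<omega>\<bar> \<le> pi \<Longrightarrow> pi - \<omega>0 < \<bar>\<omega>\<bar> \<Longrightarrow> meyer_mask \<theta> \<omega>0 \<omega> = 0"
  using \<omega>0_pos by (intro meyer_mask_eq_0) auto

lemma abs_cos_half_pow_deriv_mult_mask_l_le:
  assumes "\<bar>\<omega>\<bar> \<le> pi"
  shows "\<bar>cos_half_pow_deriv l \<omega> * meyer_mask_l \<theta> \<omega>0 l \<omega>\<bar> \<le> 2 * real l"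
proof (cases "meyer_mask \<theta> \<omega>0 \<omega> = 0 \<or> l = 0")
  case False
  then have "\<bar>\<omega>\<bar> \<le> 2 * pi / 3"
    using assms meyer_mask_eq_0_near_pi \<omega>0_ge by force
  then have c: "cos (\<omega> / 2) \<ge> 1 / 2"
    by (rule cos_half_ge_half)
  have "cos_half_pow_deriv l \<omega> * meyer_mask_l \<theta> \<omega>0 l \<omega> = - real l * sin (\<omega> / 2) * meyer_mask \<theta> \<omega>0 \<omega> / cos (\<omega> / 2)"
    using c False by (cases l) (simp_all add: cos_half_pow_deriv_def meyer_mask_l_def field_simps)
  also have "\<bar>\<dots>\<bar> = real l * (\<bar>sin (\<omega> / 2)\<bar> * \<bar>meyer_mask \<theta> \<omega>0 \<omega>\<bar>) / cos (\<omega> / 2)"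
    using c by (simp add: abs_mult)
  also have "\<dots> \<le> real l * 1 / (1 / 2)"
    using c abs_meyer_mask_le_1[of \<omega>]
    by (intro frac_le mult_left_mono mult_le_one) auto
  finally show ?thesis
    by simp
qed (auto simp: meyer_mask_l_def cos_half_pow_deriv_def)

lemma bounded_mask_l_deriv: "\<exists>C. \<forall>\<omega>. \<bar>mask_l_deriv l \<omega>\<bar> \<le> C"
proof -
  obtain M where M: "\<And>x. \<bar>mask_deriv x\<bar> \<le> M"
    using bounded_mask_deriv by blast
  have "\<bar>mask_l_deriv l \<omega>\<bar> \<le> (M + 2 * real l) / (1 / 2) ^ (2 * l)" for \<omega>
  proof (cases "\<bar>\<omega>\<bar> < pi \<and> \<bar>\<omega>\<bar> \<le> pi - \<omega>0")
    case True
    then have "(1 / 2) ^ (2 * l) \<le> cos_half_pow l \<omega>"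
      unfolding cos_half_pow_def using \<omega>0_ge cos_half_ge_half[of \<omega>] by (intro power_mono) auto
    moreover have "\<bar>mask_deriv \<omega> - cos_half_pow_deriv l \<omega> * meyer_mask_l \<theta> \<omega>0 l \<omega>\<bar> \<le> M + 2 * real l"
      using M[of \<omega>] abs_cos_half_pow_deriv_mult_mask_l_le[of \<omega> l] True by linarith
    ultimately show ?thesis
      using True by (simp add: mask_l_deriv_def abs_divide frac_le)
  next
    case False
    have "0 \<le> M"
      using order_trans[OF abs_ge_zero M] by blast
    moreover have "mask_l_deriv l \<omega> = 0"
      using False meyer_mask_eq_0_near_pi[of \<omega>] mask_deriv_eq_0[of \<omega>]
      by (auto simp: mask_l_deriv_def meyer_mask_l_def)
    ultimately show ?thesis
      by simp
  qed
  then show ?thesis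
    by blast
qed

lemma u_l_has_derivative: "(u_l \<theta> \<omega>0 lam n l has_real_derivative u1_l \<theta> \<omega>0 lam n l \<omega>) (at \<omega>)"
  unfolding u_l_def u1_l_def
  by (rule summation_mean_has_real_derivative[OF meyer_mask_l_has_derivative])
    (auto simp: meyer_mask_l_eq_0_at_pi)

lemma deriv_m_l: "deriv (m_l \<theta> \<omega>0 lam n l) \<omega> =
    (cos_half_pow_deriv l \<omega> * u_l \<theta> \<omega>0 lam n l \<omega> + cos_half_pow l \<omega> * u1_l \<theta> \<omega>0 lam n l \<omega>)
    / u_l \<theta> \<omega>0 lam n l 0"
proof -
  have "m_l \<theta> \<omega>0 lam n l = (\<lambda>x. cos_half_pow l x * u_l \<theta> \<omega>0 lam n l x / u_l \<theta> \<omega>0 lam n l 0)"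
    by (simp add: fun_eq_iff m_l_def cos_half_pow_def)
  then show ?thesis
    using DERIV_cdivide[OF DERIV_mult[OF cos_half_pow_has_real_derivative u_l_has_derivative]]
    by (intro DERIV_imp_deriv) (simp add: algebra_simps)
qed

lemma abs_u_l_sub_le_alpha:
  assumes "\<omega> \<in> {-pi..pi}"
  shows "\<bar>u_l \<theta> \<omega>0 lam n l \<omega> - meyer_mask_l \<theta> \<omega>0 l \<omega>\<bar> \<le> alpha_l \<theta> \<omega>0 lam n l"
proof -
  have "continuous_on {-pi..pi} (u_l \<theta> \<omega>0 lam n l)"
    using u_l_has_derivative by (meson DERIV_continuous continuous_at_imp_continuous_on)
  moreover have "continuous_on {-pi..pi} (meyer_mask_l \<theta> \<omega>0 l)"
    using DERIV_continuous[OF meyer_mask_l_has_derivative] by (intro continuous_at_imp_continuous_on) auto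
  ultimately show ?thesis
    unfolding alpha_l_def by (intro abs_le_supC_continuous continuous_intros assms)
qed

lemma abs_u1_l_sub_le_gamma:
  assumes "\<omega> \<in> {-pi..pi}"
  shows "\<bar>u1_l \<theta> \<omega>0 lam n l \<omega> - mask_l_deriv l \<omega>\<bar> \<le> gamma_l \<theta> \<omega>0 lam n l"
proof -
  have deriv_mask_l: "deriv (meyer_mask_l \<theta> \<omega>0 l) x = mask_l_deriv l x" if "x \<in> {-pi..pi}" for x
    using that by (intro DERIV_imp_deriv meyer_mask_l_has_derivative) auto
  have "continuous_on {-pi..pi} (u1_l \<theta> \<omega>0 lam n l)"
    unfolding u1_l_def summation_mean_def[abs_def] by (intro continuous_intros)
  then obtain B where B: "\<And>x. x \<in> {-pi..pi} \<Longrightarrow> \<bar>u1_l \<theta> \<omega>0 lam n l x\<bar> \<le> B"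
    using compact_imp_bounded[OF compact_continuous_image] by (fastforce simp: bounded_iff)
  obtain C where C: "\<And>x. \<bar>mask_l_deriv l x\<bar> \<le> C"
    using bounded_mask_l_deriv by blast
  have "\<bar>u1_l \<theta> \<omega>0 lam n l x - deriv (meyer_mask_l \<theta> \<omega>0 l) x\<bar> \<le> B + C" if "x \<in> {-pi..pi}" for x
    using B[OF that] C[of x] deriv_mask_l[OF that] by linarith
  then have "bdd_above ((\<lambda>x. \<bar>u1_l \<theta> \<omega>0 lam n l x - deriv (meyer_mask_l \<theta> \<omega>0 l) x\<bar>) ` {-pi..pi})"
    by (rule bdd_aboveI2)
  from abs_le_supC[OF this assms] show ?thesis
    using assms by (simp add: gamma_l_def deriv_mask_l)
qed

lemma abs_deriv_m_l_sub_le: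
  assumes "1 \<le> l" and "0 < d" and "d \<le> \<bar>u_l \<theta> \<omega>0 lam n l 0\<bar>"
    and M: "\<And>x. \<bar>mask_deriv x\<bar> \<le> M" and \<omega>: "\<omega> \<in> {-pi..pi}"
  shows "\<bar>deriv (m_l \<theta> \<omega>0 lam n l) \<omega> - deriv (meyer_mask \<theta> \<omega>0) \<omega>\<bar> \<le> (5 + M) / d * mu_l \<theta> \<omega>0 lam n l"
proof -
  have "\<bar>\<omega>\<bar> \<le> pi"
    using \<omega> by auto
  have product_rule: "deriv (meyer_mask \<theta> \<omega>0) \<omega>
      = cos_half_pow_deriv l \<omega> * meyer_mask_l \<theta> \<omega>0 l \<omega> + cos_half_pow l \<omega> * mask_l_deriv l \<omega>"
    using \<open>\<bar>\<omega>\<bar> \<le> pi\<close> by (simp add: DERIV_imp_deriv[OF meyer_mask_has_derivative] mask_deriv_eq_product_rule)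
  have P'f: "\<bar>cos_half_pow_deriv l \<omega> * meyer_mask_l \<theta> \<omega>0 l \<omega>\<bar> \<le> 2 * real l"
    using \<open>\<bar>\<omega>\<bar> \<le> pi\<close> by (rule abs_cos_half_pow_deriv_mult_mask_l_le)
  have "\<bar>cos_half_pow l \<omega> * mask_l_deriv l \<omega>\<bar> \<le> M + 2 * real l"
    using M[of \<omega>] P'f mask_deriv_eq_product_rule[OF \<open>\<bar>\<omega>\<bar> \<le> pi\<close>, of l] by linarith
  moreover have "\<bar>1 - u_l \<theta> \<omega>0 lam n l 0\<bar> \<le> alpha_l \<theta> \<omega>0 lam n l"
    using abs_u_l_sub_le_alpha[of 0] by (simp add: meyer_mask_l_def meyer_mask_0 abs_minus_commute)
  moreover have "0 \<le> M"
    using order_trans[OF abs_ge_zero M] by blast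
  ultimately show ?thesis
    unfolding deriv_m_l product_rule mu_l_def
    using assms P'f abs_u_l_sub_le_alpha[OF \<omega>] abs_u1_l_sub_le_gamma[OF \<omega>]
    by (intro abs_perturbed_product_rule_le abs_cos_half_pow_le_1 abs_cos_half_pow_deriv_le) auto
qed

lemma abs_supC_deriv_m_l_sub_le:
  assumes "1 \<le> l" and "0 < d" and "d \<le> \<bar>u_l \<theta> \<omega>0 lam n l 0\<bar>" and M: "\<And>x. \<bar>mask_deriv x\<bar> \<le> M"
  shows "\<bar>supC (\<lambda>\<omega>. deriv (m_l \<theta> \<omega>0 lam n l) \<omega> - deriv (meyer_mask \<theta> \<omega>0) \<omega>)\<bar>
    \<le> (5 + M) / d * \<bar>mu_l \<theta> \<omega>0 lam n l\<bar>"
proof -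
  note bound = abs_deriv_m_l_sub_le[OF assms]
  have "0 \<le> supC (\<lambda>\<omega>. deriv (m_l \<theta> \<omega>0 lam n l) \<omega> - deriv (meyer_mask \<theta> \<omega>0) \<omega>)"
    using bound by (intro supC_nonneg bdd_aboveI2)
  moreover have "supC (\<lambda>\<omega>. deriv (m_l \<theta> \<omega>0 lam n l) \<omega> - deriv (meyer_mask \<theta> \<omega>0) \<omega>)
      \<le> (5 + M) / d * mu_l \<theta> \<omega>0 lam n l"
    using bound by (rule supC_le)
  moreover have "0 \<le> (5 + M) / d"
    using order_trans[OF abs_ge_zero M] \<open>0 < d\<close> by simp
  ultimately show ?thesis
    using mult_left_mono[OF abs_ge_self, of "(5 + M) / d" "mu_l \<theta> \<omega>0 lam n l"] by simp
qed

end

theorem lemma2: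
  fixes \<theta> :: "real \<Rightarrow> real" and \<omega>0 :: real
    and lam :: "nat \<Rightarrow> nat \<Rightarrow> real" and n :: "nat \<Rightarrow> nat" and l0 :: nat
  assumes odd: "\<And>x. \<theta> (- x) = - \<theta> x"
    and mono: "mono \<theta>"
    and C2: "\<exists>\<theta>' \<theta>''. (\<forall>x. (\<theta> has_real_derivative \<theta>' x) (at x))
               \<and> (\<forall>x. (\<theta>' has_real_derivative \<theta>'' x) (at x)) \<and> continuous_on UNIV \<theta>''"
    and flat: "\<And>x. x > pi / 3 \<Longrightarrow> \<theta> x = pi / 4"
    and w0: "pi / 3 \<le> \<omega>0" "\<omega>0 < pi / 2"
    and alpha: "(\<lambda>l. alpha_l \<theta> \<omega>0 lam n l) \<in> o(\<lambda>l. 1 / real l)"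
    and gamma: "(\<lambda>l. gamma_l \<theta> \<omega>0 lam n l) \<in> o(\<lambda>l. 1)"
    and upi: "\<And>l. u_l \<theta> \<omega>0 lam n l pi \<noteq> 0"
    and u0: "(INF l\<in>{l0..}. \<bar>u_l \<theta> \<omega>0 lam n l 0\<bar>) > 0"
  shows "(\<lambda>l. supC (\<lambda>\<omega>. deriv (m_l \<theta> \<omega>0 lam n l) \<omega> - deriv (meyer_mask \<theta> \<omega>0) \<omega>))
           \<in> O(\<lambda>l. mu_l \<theta> \<omega>0 lam n l)"
proof -
  obtain \<theta>' \<theta>'' where \<theta>': "\<And>x. (\<theta> has_real_derivative \<theta>' x) (at x)"
    and "\<And>x. (\<theta>' has_real_derivative \<theta>'' x) (at x)"
    using C2 by blast
  then have "continuous_on UNIV \<theta>'"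
    by (meson DERIV_continuous continuous_at_imp_continuous_on)
  then interpret meyer_angle \<theta> \<theta>' \<omega>0
    using odd \<theta>' flat w0 by unfold_locales
  obtain M where M: "\<And>x. \<bar>mask_deriv x\<bar> \<le> M"
    using bounded_mask_deriv by blast
  define d where "d = (INF l\<in>{l0..}. \<bar>u_l \<theta> \<omega>0 lam n l 0\<bar>)"
  have d: "d \<le> \<bar>u_l \<theta> \<omega>0 lam n l 0\<bar>" if "l0 \<le> l" for l
    unfolding d_def using that by (intro cINF_lower bdd_belowI[of _ 0]) auto
  have "0 < d"
    using u0 by (simp add: d_def)
  have "\<forall>\<^sub>F l in at_top. norm (supC (\<lambda>\<omega>. deriv (m_l \<theta> \<omega>0 lam n l) \<omega> - deriv (meyer_mask \<theta> \<omega>0) \<omega>))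
      \<le> (5 + M) / d * norm (mu_l \<theta> \<omega>0 lam n l)"
    using eventually_ge_at_top[of "max l0 1"]
  proof eventually_elim
    case (elim l)
    then show ?case
      unfolding real_norm_def using \<open>0 < d\<close> d M by (intro abs_supC_deriv_m_l_sub_le) auto
  qed
  then show ?thesis
    by (rule bigoI)
qed

end
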